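(* Let $S$ be the group defined in the context. The subgroup $\langle v_1v_3\rangle$ is cyclic of order $4$ and is normal in $S$. Moreover, $S/\langle v_1v_3\rangle\cong \mathbb{Z}/2\wr\mathbb{Z}/2\wr\mathbb{Z}/2$.
   Context: Let $S$ be the group generated by $v_1,v_2,v_3,s,t$, where $v_1,v_2,v_3$ commute, each has order $4$, and together generate $(\mathbb{Z}/4)^3$. The elements $s,t$ generate $D_8=\langle t,s\mid t^2=s^4=(ts)^2=1\rangle$, which acts on $(\mathbb{Z}/4)^3$ by conjugation. Writing $x^y=yxy^{-1}$, the action is $$v_1^t=v_3^{-1},\quad v_2^t=v_2^{-1},\quad v_1^s=v_2,\quad v_2^s=v_3,\quad v_3^s=v_2^{-1}v_1v_3.$$ So $S=(\mathbb{Z}/4)^3\rtimes D_8$ has order $2^9$. The group $\mathbb{Z}/2\wr\mathbb{Z}/2\wr\mathbb{Z}/2$ is the iterated wreath product, of order $2^7$; it is a Sylow $2$-subgroup of the symmetric group $S_8$. *)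

theory Defs
  imports "HOL-Algebra.Algebra"
begin

text \<open>(Z/4)^3 is modelled by integer triples (a,b,c) with entries in {0..3},
  standing for v1^a v2^b v3^c (written additively).  D8 is modelled by pairs
  (k,e) with k in {0..3}, e :: bool, standing for s^k t^e (t^True = t).\<close>

definition vmod :: "int \<times> int \<times> int \<Rightarrow> int \<times> int \<times> int" where
  "vmod v = (case v of (a,b,c) \<Rightarrow> (a mod 4, b mod 4, c mod 4))"

definition vadd :: "int \<times> int \<times> int \<Rightarrow> int \<times> int \<times> int \<Rightarrow> int \<times> int \<times> int" where
  "vadd v w = (case v of (a,b,c) \<Rightarrow> case w of (x,y,z) \<Rightarrow> vmod (a+x, b+y, c+z))"

text \<open>Conjugation action of t: v1 -> v3^-1, v2 -> v2^-1, v3 -> v1^-1.\<close>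
definition act_t :: "int \<times> int \<times> int \<Rightarrow> int \<times> int \<times> int" where
  "act_t v = (case v of (a,b,c) \<Rightarrow> vmod (-c, -b, -a))"

text \<open>Conjugation action of s: v1 -> v2, v2 -> v3, v3 -> v2^-1 v1 v3.\<close>
definition act_s :: "int \<times> int \<times> int \<Rightarrow> int \<times> int \<times> int" where
  "act_s v = (case v of (a,b,c) \<Rightarrow> vmod (c, a - c, b + c))"

text \<open>Action of s^k t^e (x^y = y x y^-1, a left action).\<close>
definition d8_act :: "int \<times> bool \<Rightarrow> int \<times> int \<times> int \<Rightarrow> int \<times> int \<times> int" where
  "d8_act g v = (case g of (k,e) \<Rightarrow> (act_s ^^ nat k) (if e then act_t v else v))"

text \<open>Multiplication in D8 = <t,s | t^2 = s^4 = (ts)^2 = 1>, using t s^l = s^-l t.\<close>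
definition d8_mult :: "int \<times> bool \<Rightarrow> int \<times> bool \<Rightarrow> int \<times> bool" where
  "d8_mult g h = (case g of (k,e) \<Rightarrow> case h of (l,f) \<Rightarrow>
      ((k + (if e then - l else l)) mod 4, e \<noteq> f))"

type_synonym S_elem = "(int \<times> int \<times> int) \<times> (int \<times> bool)"

definition S_grp :: "S_elem monoid" where
  "S_grp = \<lparr> carrier = {((a,b,c),(k,e)). a \<in> {0..3} \<and> b \<in> {0..3} \<and> c \<in> {0..3} \<and> k \<in> {0..3}},
             monoid.mult = (\<lambda>(v,g) (w,h). (vadd v (d8_act g w), d8_mult g h)),
             one = ((0,0,0),(0,False)) \<rparr>"

definition gen_v1 :: S_elem where "gen_v1 = ((1,0,0),(0,False))"
definition gen_v2 :: S_elem where "gen_v2 = ((0,1,0),(0,False))"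
definition gen_v3 :: S_elem where "gen_v3 = ((0,0,1),(0,False))"
definition gen_s :: S_elem where "gen_s = ((0,0,0),(1,False))"
definition gen_t :: S_elem where "gen_t = ((0,0,0),(0,True))"

definition wreath_perm ::
  "('a \<Rightarrow> 'a) set \<Rightarrow> 'a set \<Rightarrow> ('b \<Rightarrow> 'b) set \<Rightarrow> 'b set \<Rightarrow> ('a \<times> 'b \<Rightarrow> 'a \<times> 'b) set" where
  "wreath_perm PG PX PH PY = {p. \<exists>f h. h \<in> PH \<and> (\<forall>y\<in>PY. f y \<in> PG) \<and>
      p = (\<lambda>(x,y). if x \<in> PX \<and> y \<in> PY then (f y x, h y) else (x,y))}"

definition C2_perm :: "(bool \<Rightarrow> bool) set" where
  "C2_perm = {id, Not}"

definition W3 :: "((bool \<times> bool) \<times> bool \<Rightarrow> (bool \<times> bool) \<times> bool) monoid" where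
  "W3 = (BijGroup UNIV)\<lparr> carrier :=
      wreath_perm (wreath_perm C2_perm UNIV C2_perm UNIV) UNIV C2_perm UNIV \<rparr>"

end

theory Submission
  imports Defs "HOL-Library.Numeral_Type" "HOL-Library.Cardinality"
begin

(* Send v1, v2, v3, s, t to explicit permutations of the eight points ((x1, x2), y), i.e. to
   elements of Z/2 wr Z/2 wr Z/2.  The images of s and t satisfy the dihedral relations, the
   images of the v_i commute and have order dividing 4, and conjugation by the images of s and t
   permutes the images of the v_i exactly as s and t act on (Z/4)^3.  So the assignment extends
   to a homomorphism from S.  Its image contains the elementary flips, which generate the wreath
   product, so it is onto and its kernel has order 512 / 128 = 4.  Since v1 v3 lies in the kernel
   and has order 4, the kernel is <v1 v3>, which is therefore normal with quotient the wreath
   product. *)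

section \<open>Arithmetic in (Z/4)^3\<close>

lemma Rep_bit0_of_int: "Rep_bit0 (of_int x :: 'a::finite bit0) = x mod int CARD('a bit0)"
  using bit0.Rep_Abs_mod[of x] by (simp add: bit0.of_int_eq)

lemma of_int_Rep_bit0: "of_int (Rep_bit0 z) = (z :: 'a::finite bit0)"
  using bit0.Rep_mod[of z] by (simp add: bit0.of_int_eq Rep_bit0_inverse)

(* Identities between residues mod 4 are proved in the ring 4 of Numeral_Type: once every
   x mod 4 is rewritten as Rep_bit0 (of_int x), they become ring identities. *)
lemma int_mod_4_eq_Rep_bit0: "(x::int) mod 4 = Rep_bit0 (of_int x :: 4)"
  by (simp add: Rep_bit0_of_int)

lemma Rep_bit0_of_int_4: "0 \<le> x \<Longrightarrow> x \<le> 3 \<Longrightarrow> Rep_bit0 (of_int x :: 4) = x"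
  by (simp add: Rep_bit0_of_int)

lemmas Z4_ring_simps = of_int_Rep_bit0 Rep_bit0_inject Rep_bit0_of_int_4 bit0.Rep_0

definition Z4_cube :: "(int \<times> int \<times> int) set" where
  "Z4_cube = {0..3} \<times> {0..3} \<times> {0..3}"

definition D8_elems :: "(int \<times> bool) set" where
  "D8_elems = {0..3} \<times> UNIV"

lemma vmod_in_Z4_cube: "vmod v \<in> Z4_cube"
  unfolding vmod_def Z4_cube_def by (cases v) auto

lemma vadd_in_Z4_cube: "vadd v w \<in> Z4_cube"
  unfolding vadd_def by (cases v; cases w) (auto simp: vmod_in_Z4_cube)

lemma act_s_in_Z4_cube: "act_s v \<in> Z4_cube"
  unfolding act_s_def by (cases v) (auto simp: vmod_in_Z4_cube)

lemma act_t_in_Z4_cube: "act_t v \<in> Z4_cube"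
  unfolding act_t_def by (cases v) (auto simp: vmod_in_Z4_cube)

lemma vadd_assoc: "vadd (vadd u v) w = vadd u (vadd v w)"
  unfolding vadd_def vmod_def
  by (cases u; cases v; cases w)
    (simp only: prod.case int_mod_4_eq_Rep_bit0; simp add: Z4_ring_simps algebra_simps)

lemma act_s_vadd: "act_s (vadd v w) = vadd (act_s v) (act_s w)"
  unfolding act_s_def vadd_def vmod_def
  by (cases v; cases w)
    (simp only: prod.case int_mod_4_eq_Rep_bit0; simp add: Z4_ring_simps algebra_simps)

lemma act_t_vadd: "act_t (vadd v w) = vadd (act_t v) (act_t w)"
  unfolding act_t_def vadd_def vmod_def
  by (cases v; cases w)
    (simp only: prod.case int_mod_4_eq_Rep_bit0; simp add: Z4_ring_simps algebra_simps)

lemma act_s_pow4: "v \<in> Z4_cube \<Longrightarrow> (act_s ^^ 4) v = v"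
  unfolding act_s_def vmod_def Z4_cube_def
  by (cases v) (simp add: numeral_eq_Suc;
    simp only: prod.case int_mod_4_eq_Rep_bit0; simp add: Z4_ring_simps algebra_simps)

lemma act_t_act_t: "v \<in> Z4_cube \<Longrightarrow> act_t (act_t v) = v"
  unfolding act_t_def vmod_def Z4_cube_def
  by (cases v) (simp only: prod.case int_mod_4_eq_Rep_bit0; simp add: Z4_ring_simps algebra_simps)

lemma act_t_act_s: "act_t (act_s v) = (act_s ^^ 3) (act_t v)"
  unfolding act_s_def act_t_def vmod_def
  by (cases v) (simp add: numeral_eq_Suc;
    simp only: prod.case int_mod_4_eq_Rep_bit0; simp add: Z4_ring_simps algebra_simps)

definition vscale :: "int \<Rightarrow> int \<times> int \<times> int \<Rightarrow> int \<times> int \<times> int" where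
  "vscale n v = (case v of (a, b, c) \<Rightarrow> vmod (n * a, n * b, n * c))"

lemma vscale_mod: "vscale (n mod 4) v = vscale n v"
  unfolding vscale_def vmod_def
  by (cases v) (simp only: prod.case int_mod_4_eq_Rep_bit0; simp add: Z4_ring_simps algebra_simps)

lemma vscale_Suc: "vscale (1 + n) v = vadd v (vscale n v)"
  unfolding vscale_def vadd_def vmod_def
  by (cases v) (simp only: prod.case int_mod_4_eq_Rep_bit0; simp add: Z4_ring_simps algebra_simps)

lemma act_s_lincomb:
  "act_s (a, b, c) = vadd (vscale a (0, 1, 0)) (vadd (vscale b (0, 0, 1)) (vscale c (1, - 1, 1)))"
  unfolding act_s_def vadd_def vscale_def vmod_def
  by (simp only: prod.case int_mod_4_eq_Rep_bit0; simp add: Z4_ring_simps algebra_simps)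

lemma act_t_lincomb:
  "act_t (a, b, c) =
     vadd (vscale a (0, 0, - 1)) (vadd (vscale b (0, - 1, 0)) (vscale c (- 1, 0, 0)))"
  unfolding act_t_def vadd_def vscale_def vmod_def
  by (simp only: prod.case int_mod_4_eq_Rep_bit0; simp add: Z4_ring_simps algebra_simps)

section \<open>Maps satisfying the defining relations\<close>

lemma funpow_intertwine: "f \<circ> g = h \<circ> f \<Longrightarrow> f \<circ> g ^^ n = h ^^ n \<circ> f"
proof (induction n)
  case (Suc n)
  then have "f \<circ> (g ^^ n \<circ> g) = h ^^ n \<circ> (h \<circ> f)"
    by (metis comp_assoc)
  then show ?case by (simp only: funpow_Suc_right funpow.simps(2)[symmetric] comp_assoc)
qed simp

lemma funpow_commute:
  assumes "f \<circ> g = g \<circ> f" shows "f ^^ m \<circ> g ^^ n = g ^^ n \<circ> f ^^ m"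
proof -
  have "g ^^ n \<circ> f = f \<circ> g ^^ n" using funpow_intertwine[OF assms] by simp
  then show ?thesis by (simp add: funpow_intertwine)
qed

lemma funpow_mod_period: "f ^^ k = id \<Longrightarrow> f ^^ (n mod k) = f ^^ n"
proof -
  assume "f ^^ k = id"
  have "f ^^ n = f ^^ (n mod k) \<circ> (f ^^ k) ^^ (n div k)"
    by (simp only: funpow_mult funpow_add[symmetric] mod_mult_div_eq)
  then show ?thesis by (simp add: \<open>f ^^ k = id\<close>)
qed

lemma funpow_nat_mod_add:
  assumes "f ^^ 4 = id"
  shows "f ^^ nat ((a + b) mod 4) = f ^^ nat (a mod 4) \<circ> f ^^ nat (b mod 4)"
proof -
  have "(a + b) mod 4 = (a mod 4 + b mod 4) mod 4" by (simp add: mod_add_eq)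
  then have "nat ((a + b) mod 4) = (nat (a mod 4) + nat (b mod 4)) mod 4"
    by (simp add: nat_mod_distrib nat_add_distrib)
  then show ?thesis by (simp add: funpow_mod_period[OF assms] funpow_add)
qed

lemma comp_left_commute: "f \<circ> g = g \<circ> f \<Longrightarrow> f \<circ> (g \<circ> h) = g \<circ> (f \<circ> h)"
  by (simp add: comp_assoc[symmetric])

definition cube_rep ::
    "('a \<Rightarrow> 'a) \<Rightarrow> ('a \<Rightarrow> 'a) \<Rightarrow> ('a \<Rightarrow> 'a) \<Rightarrow> int \<times> int \<times> int \<Rightarrow> 'a \<Rightarrow> 'a" where
  "cube_rep f g h v =
     (case v of (a, b, c) \<Rightarrow> f ^^ nat (a mod 4) \<circ> g ^^ nat (b mod 4) \<circ> h ^^ nat (c mod 4))"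

lemma cube_rep_vmod: "cube_rep f g h (vmod v) = cube_rep f g h v"
  by (cases v) (simp add: cube_rep_def vmod_def)

context
  fixes f g h :: "'a \<Rightarrow> 'a"
  assumes order_4: "f ^^ 4 = id" "g ^^ 4 = id" "h ^^ 4 = id"
    and commute: "f \<circ> g = g \<circ> f" "f \<circ> h = h \<circ> f" "g \<circ> h = h \<circ> g"
begin

lemma cube_rep_vadd: "cube_rep f g h (vadd v w) = cube_rep f g h v \<circ> cube_rep f g h w"
proof -
  obtain a b c x y z where v: "v = (a, b, c)" and w: "w = (x, y, z)" by (cases v, cases w)
  define F G H
    where "F n = f ^^ nat (n mod 4)" and "G n = g ^^ nat (n mod 4)" and "H n = h ^^ nat (n mod 4)"
    for n :: int
  have FG: "F m \<circ> G n = G n \<circ> F m" and FH: "F m \<circ> H n = H n \<circ> F m"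
    and GH: "G m \<circ> H n = H n \<circ> G m" for m n
    using funpow_commute[OF commute(1)] funpow_commute[OF commute(2)] funpow_commute[OF commute(3)]
    by (simp_all add: F_def G_def H_def)
  have "cube_rep f g h (vadd v w) = cube_rep f g h (a + x, b + y, c + z)"
    by (simp add: v w vadd_def cube_rep_vmod)
  also have "\<dots> = (F a \<circ> F x) \<circ> (G b \<circ> G y) \<circ> (H c \<circ> H z)"
    by (simp add: cube_rep_def F_def G_def H_def funpow_nat_mod_add order_4)
  also have "\<dots> = F a \<circ> G b \<circ> H c \<circ> (F x \<circ> G y \<circ> H z)"
    by (simp only: comp_assoc comp_left_commute[OF FG[of x b]] comp_left_commute[OF FH[of x c]]
        comp_left_commute[OF GH[of y c]])
  also have "\<dots> = cube_rep f g h v \<circ> cube_rep f g h w"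
    by (simp add: v w cube_rep_def F_def G_def H_def)
  finally show ?thesis .
qed

lemma cube_rep_funpow: "cube_rep f g h u ^^ n = cube_rep f g h (vscale (int n) u)"
proof (induction n)
  case 0
  then show ?case by (cases u) (simp add: cube_rep_def vscale_def vmod_def)
next
  case (Suc n)
  have "cube_rep f g h u ^^ Suc n = cube_rep f g h u \<circ> cube_rep f g h (vscale (int n) u)"
    using Suc by (simp only: funpow.simps(2))
  then show ?case by (simp add: vscale_Suc cube_rep_vadd)
qed

lemma cube_rep_intertwine:
  assumes "k \<circ> f = cube_rep f g h u1 \<circ> k" "k \<circ> g = cube_rep f g h u2 \<circ> k"
    and "k \<circ> h = cube_rep f g h u3 \<circ> k"
  shows "k \<circ> cube_rep f g h (a, b, c) =
    cube_rep f g h (vadd (vscale a u1) (vadd (vscale b u2) (vscale c u3))) \<circ> k"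
proof -
  have pow: "k \<circ> p ^^ nat (n mod 4) = cube_rep f g h (vscale n u) \<circ> k"
    if "k \<circ> p = cube_rep f g h u \<circ> k" for p u n
    using funpow_intertwine[OF that, of "nat (n mod 4)"] by (simp add: cube_rep_funpow vscale_mod)
  show ?thesis
    by (simp add: cube_rep_def[of f g h "(a, b, c)"] comp_assoc[symmetric] pow[OF assms(1)])
      (simp add: comp_assoc pow[OF assms(2)] pow[OF assms(3)] cube_rep_vadd)
qed

end

(* The presentation t^2 = s^4 = (ts)^2 = 1, with (ts)^2 = 1 in the equivalent form t s = s^3 t,
   imposed pointwise on an invariant set A: the action of D8 on integer triples is periodic only
   on reduced triples. *)
definition d8_relations :: "('a \<Rightarrow> 'a) \<Rightarrow> ('a \<Rightarrow> 'a) \<Rightarrow> 'a set \<Rightarrow> bool" where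
  "d8_relations s t A \<longleftrightarrow>
     (\<forall>x\<in>A. s x \<in> A \<and> t x \<in> A \<and> (s ^^ 4) x = x \<and> t (t x) = x \<and> t (s x) = (s ^^ 3) (t x))"

definition d8_rep :: "('a \<Rightarrow> 'a) \<Rightarrow> ('a \<Rightarrow> 'a) \<Rightarrow> int \<times> bool \<Rightarrow> 'a \<Rightarrow> 'a" where
  "d8_rep s t g x = (case g of (k, e) \<Rightarrow> (s ^^ nat k) (if e then t x else x))"

lemma d8_rep_eq_comp: "d8_rep s t (k, e) = s ^^ nat k \<circ> (if e then t else id)"
  by (simp add: d8_rep_def fun_eq_iff)

lemma d8_act_eq_d8_rep: "d8_act = d8_rep act_s act_t"
  by (simp add: fun_eq_iff d8_act_def d8_rep_def)

context
  fixes s t :: "'a \<Rightarrow> 'a" and A :: "'a set"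
  assumes rels: "d8_relations s t A"
begin

lemma d8_relations_closed: "x \<in> A \<Longrightarrow> s x \<in> A" "x \<in> A \<Longrightarrow> t x \<in> A"
  using rels by (auto simp: d8_relations_def)

lemma d8_relations_funpow_in: "x \<in> A \<Longrightarrow> (s ^^ n) x \<in> A"
  by (induction n) (auto simp: d8_relations_closed)

lemma d8_relations_funpow_mod:
  assumes "x \<in> A" shows "(s ^^ n) x = (s ^^ (n mod 4)) x"
proof -
  have period: "(s ^^ (4 * q)) x = x" for q
  proof (induction q)
    case (Suc q)
    have "(s ^^ (4 * Suc q)) x = (s ^^ 4) ((s ^^ (4 * q)) x)"
      by (simp only: mult_Suc_right funpow_add comp_apply)
    then show ?case using Suc rels assms by (simp add: d8_relations_def)
  qed simp
  have "(s ^^ n) x = (s ^^ (n mod 4)) ((s ^^ (4 * (n div 4))) x)"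
    by (metis comp_apply funpow_add mod_mult_div_eq)
  then show ?thesis by (simp add: period)
qed

lemma d8_relations_t_funpow: "x \<in> A \<Longrightarrow> t ((s ^^ n) x) = (s ^^ (3 * n)) (t x)"
proof (induction n)
  case (Suc n)
  have "t ((s ^^ Suc n) x) = (s ^^ 3) (t ((s ^^ n) x))"
    using rels d8_relations_funpow_in[OF Suc.prems] by (simp add: d8_relations_def)
  also have "\<dots> = (s ^^ (3 * Suc n)) (t x)"
    using Suc by (simp add: funpow_add)
  finally show ?case .
qed simp

lemma d8_rep_mult:
  assumes "g \<in> D8_elems" "h \<in> D8_elems" "x \<in> A"
  shows "d8_rep s t (d8_mult g h) x = d8_rep s t g (d8_rep s t h x)"
proof -
  obtain k e l f where g: "g = (k, e)" and h: "h = (l, f)" and kl: "0 \<le> k" "0 \<le> l"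
    using assms by (cases g, cases h) (auto simp: D8_elems_def)
  define y where "y = (if f then t x else x)"
  have y: "y \<in> A" using assms by (simp add: y_def d8_relations_closed)
  show ?thesis
  proof (cases e)
    case False
    have "nat ((k + l) mod 4) = (nat k + nat l) mod 4"
      using kl by (simp add: nat_mod_distrib nat_add_distrib)
    then show ?thesis
      using False d8_relations_funpow_mod[OF y, of "nat k + nat l"]
      by (simp add: g h d8_rep_def d8_mult_def y_def funpow_add)
  next
    case True
    have "(k - l) mod 4 = (k + 3 * l) mod 4"
      by (simp add: mod_eq_dvd_iff)
    then have "nat ((k - l) mod 4) = (nat k + 3 * nat l) mod 4"
      using kl by (simp add: nat_mod_distrib nat_add_distrib nat_mult_distrib)
    moreover have "t y = (if \<not> f then t x else x)"
      using rels assms by (simp add: y_def d8_relations_def)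
    moreover have "t y \<in> A" using y by (rule d8_relations_closed)
    ultimately show ?thesis
      using True d8_relations_funpow_mod[of "t y" "nat k + 3 * nat l"] y
      by (simp add: g h d8_rep_def d8_mult_def d8_relations_t_funpow funpow_add flip: y_def)
  qed
qed

lemma d8_rep_intertwine:
  assumes s': "\<And>w. w \<in> A \<Longrightarrow> s' \<circ> P w = P (s w) \<circ> s'"
    and t': "\<And>w. w \<in> A \<Longrightarrow> t' \<circ> P w = P (t w) \<circ> t'"
    and "w \<in> A"
  shows "d8_rep s' t' g \<circ> P w = P (d8_rep s t g w) \<circ> d8_rep s' t' g"
proof -
  have powers: "s' ^^ n \<circ> P u = P ((s ^^ n) u) \<circ> s' ^^ n" if "u \<in> A" for n u
    using that
  proof (induction n arbitrary: u)
    case (Suc n)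
    have "s' ^^ Suc n \<circ> P u = s' ^^ n \<circ> (s' \<circ> P u)"
      by (simp only: funpow_Suc_right comp_assoc)
    also have "\<dots> = (s' ^^ n \<circ> P (s u)) \<circ> s'"
      using s'[OF Suc.prems] by (simp only: comp_assoc)
    also have "\<dots> = (P ((s ^^ n) (s u)) \<circ> s' ^^ n) \<circ> s'"
      by (simp only: Suc.IH[OF d8_relations_closed(1)[OF Suc.prems]])
    also have "\<dots> = P ((s ^^ Suc n) u) \<circ> s' ^^ Suc n"
      by (simp only: funpow_Suc_right comp_assoc comp_apply)
    finally show ?case .
  qed simp
  obtain k e where g: "g = (k, e)" by (cases g)
  show ?thesis
  proof (cases e)
    case True
    have "s' ^^ nat k \<circ> (t' \<circ> P w) = P ((s ^^ nat k) (t w)) \<circ> (s' ^^ nat k \<circ> t')"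
      using t' powers d8_relations_closed(2) assms(3) by (simp add: comp_assoc[symmetric])
    then show ?thesis using True by (simp add: g d8_rep_def fun_eq_iff)
  next
    case False
    then show ?thesis using powers[OF assms(3)] by (simp add: g d8_rep_def fun_eq_iff)
  qed
qed

end

section \<open>The group S\<close>

lemma d8_relations_act: "d8_relations act_s act_t Z4_cube"
  by (simp add: d8_relations_def act_s_in_Z4_cube act_t_in_Z4_cube act_s_pow4 act_t_act_t
      act_t_act_s)

lemma d8_act_mult:
  "g \<in> D8_elems \<Longrightarrow> h \<in> D8_elems \<Longrightarrow> w \<in> Z4_cube \<Longrightarrow>
     d8_act (d8_mult g h) w = d8_act g (d8_act h w)"
  unfolding d8_act_eq_d8_rep by (rule d8_rep_mult[OF d8_relations_act])

lemma d8_act_in_Z4_cube: "w \<in> Z4_cube \<Longrightarrow> d8_act g w \<in> Z4_cube"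
  unfolding d8_act_def
  by (cases g) (simp add: d8_relations_funpow_in[OF d8_relations_act] act_t_in_Z4_cube)

lemma d8_act_vadd: "d8_act g (vadd v w) = vadd (d8_act g v) (d8_act g w)"
proof -
  have "(act_s ^^ n) (vadd v w) = vadd ((act_s ^^ n) v) ((act_s ^^ n) w)" for n v w
    by (induction n) (simp_all add: act_s_vadd)
  then show ?thesis by (cases g) (simp add: d8_act_def act_t_vadd)
qed

lemma d8_mult_in_D8_elems: "d8_mult g h \<in> D8_elems"
  unfolding d8_mult_def D8_elems_def by (cases g; cases h) auto

lemma d8_mult_assoc:
  "g \<in> D8_elems \<Longrightarrow> h \<in> D8_elems \<Longrightarrow> i \<in> D8_elems \<Longrightarrow>
     d8_mult (d8_mult g h) i = d8_mult g (d8_mult h i)"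
  unfolding d8_mult_def
  by (cases g; cases h; cases i)
    (simp split: if_split; simp only: int_mod_4_eq_Rep_bit0; simp add: Z4_ring_simps algebra_simps)

definition vneg :: "int \<times> int \<times> int \<Rightarrow> int \<times> int \<times> int" where
  "vneg v = (case v of (a, b, c) \<Rightarrow> vmod (- a, - b, - c))"

lemma vadd_vneg_left: "vadd (vneg v) v = (0, 0, 0)"
  unfolding vneg_def vadd_def vmod_def
  by (cases v) (simp only: prod.case int_mod_4_eq_Rep_bit0; simp add: Z4_ring_simps algebra_simps)

lemma vadd_zero_left: "v \<in> Z4_cube \<Longrightarrow> vadd (0, 0, 0) v = v"
  unfolding vadd_def Z4_cube_def vmod_def by (cases v) auto

lemma carrier_S_grp: "carrier S_grp = Z4_cube \<times> D8_elems"
  unfolding S_grp_def Z4_cube_def D8_elems_def by auto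

lemma mult_S_grp: "(v, g) \<otimes>\<^bsub>S_grp\<^esub> (w, h) = (vadd v (d8_act g w), d8_mult g h)"
  unfolding S_grp_def by simp

lemma one_S_grp: "\<one>\<^bsub>S_grp\<^esub> = ((0, 0, 0), (0, False))"
  unfolding S_grp_def by simp

lemma card_S_grp: "card (carrier S_grp) = 512"
  by (simp add: carrier_S_grp Z4_cube_def D8_elems_def card_cartesian_product)

lemma group_S_grp: "group S_grp"
proof (rule groupI)
  fix x y assume "x \<in> carrier S_grp" "y \<in> carrier S_grp"
  then show "x \<otimes>\<^bsub>S_grp\<^esub> y \<in> carrier S_grp"
    by (auto simp: carrier_S_grp mult_S_grp vadd_in_Z4_cube d8_mult_in_D8_elems)
next
  show "\<one>\<^bsub>S_grp\<^esub> \<in> carrier S_grp"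
    by (simp add: carrier_S_grp one_S_grp Z4_cube_def D8_elems_def)
next
  fix x y z assume "x \<in> carrier S_grp" "y \<in> carrier S_grp" "z \<in> carrier S_grp"
  then obtain u g v h w i where xyz: "x = (u, g)" "y = (v, h)" "z = (w, i)"
    and mem: "g \<in> D8_elems" "h \<in> D8_elems" "i \<in> D8_elems" "w \<in> Z4_cube"
    by (auto simp: carrier_S_grp)
  have "d8_act g (vadd v (d8_act h w)) = vadd (d8_act g v) (d8_act (d8_mult g h) w)"
    using mem by (simp add: d8_act_vadd d8_act_mult)
  then show "x \<otimes>\<^bsub>S_grp\<^esub> y \<otimes>\<^bsub>S_grp\<^esub> z = x \<otimes>\<^bsub>S_grp\<^esub> (y \<otimes>\<^bsub>S_grp\<^esub> z)"
    using mem by (simp add: xyz mult_S_grp vadd_assoc d8_mult_assoc)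
next
  fix x assume "x \<in> carrier S_grp"
  then obtain v k e where x: "x = (v, (k, e))" "v \<in> Z4_cube" "k \<in> {0..3}"
    by (auto simp: carrier_S_grp D8_elems_def)
  then show "\<one>\<^bsub>S_grp\<^esub> \<otimes>\<^bsub>S_grp\<^esub> x = x"
    by (simp add: one_S_grp mult_S_grp d8_act_def vadd_zero_left d8_mult_def)
next
  fix x assume "x \<in> carrier S_grp"
  then obtain v k e where x: "x = (v, (k, e))" "v \<in> Z4_cube" "k \<in> {0..3}"
    by (auto simp: carrier_S_grp D8_elems_def)
  define h where "h = (if e then (k, True) else ((- k) mod 4, False))"
  have "d8_mult h (k, e) = (0, False)"
    unfolding h_def d8_mult_def by (auto simp: mod_simps)
  then have "(vneg (d8_act h v), h) \<otimes>\<^bsub>S_grp\<^esub> x = \<one>\<^bsub>S_grp\<^esub>"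
    by (simp add: x mult_S_grp one_S_grp vadd_vneg_left)
  moreover have "(vneg (d8_act h v), h) \<in> carrier S_grp"
    using x
    by (auto simp: carrier_S_grp h_def D8_elems_def vneg_def vmod_in_Z4_cube split: prod.split)
  ultimately show "\<exists>y\<in>carrier S_grp. y \<otimes>\<^bsub>S_grp\<^esub> x = \<one>\<^bsub>S_grp\<^esub>" by blast
qed

lemma hom_S_grpI:
  assumes "monoid G"
    and P: "\<And>v. v \<in> Z4_cube \<Longrightarrow> P v \<in> carrier G"
    and Q: "\<And>g. g \<in> D8_elems \<Longrightarrow> Q g \<in> carrier G"
    and P_mult: "\<And>v w. v \<in> Z4_cube \<Longrightarrow> w \<in> Z4_cube \<Longrightarrow>
      P (vadd v w) = P v \<otimes>\<^bsub>G\<^esub> P w"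
    and Q_mult: "\<And>g h. g \<in> D8_elems \<Longrightarrow> h \<in> D8_elems \<Longrightarrow>
      Q (d8_mult g h) = Q g \<otimes>\<^bsub>G\<^esub> Q h"
    and QP: "\<And>g w. g \<in> D8_elems \<Longrightarrow> w \<in> Z4_cube \<Longrightarrow>
      Q g \<otimes>\<^bsub>G\<^esub> P w = P (d8_act g w) \<otimes>\<^bsub>G\<^esub> Q g"
    and \<phi>: "\<And>v g. v \<in> Z4_cube \<Longrightarrow> g \<in> D8_elems \<Longrightarrow> \<phi> (v, g) = P v \<otimes>\<^bsub>G\<^esub> Q g"
  shows "\<phi> \<in> hom S_grp G"
proof -
  interpret G: monoid G by fact
  show ?thesis
  proof (rule homI)
    fix x assume "x \<in> carrier S_grp"
    then show "\<phi> x \<in> carrier G" by (auto simp: carrier_S_grp \<phi> P Q)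
  next
    fix x y assume "x \<in> carrier S_grp" "y \<in> carrier S_grp"
    then obtain v g w h where xy: "x = (v, g)" "y = (w, h)"
      and mem: "v \<in> Z4_cube" "g \<in> D8_elems" "w \<in> Z4_cube" "h \<in> D8_elems"
      by (auto simp: carrier_S_grp)
    have gw: "d8_act g w \<in> Z4_cube" using mem by (simp add: d8_act_in_Z4_cube)
    have "\<phi> (x \<otimes>\<^bsub>S_grp\<^esub> y) = P (vadd v (d8_act g w)) \<otimes>\<^bsub>G\<^esub> Q (d8_mult g h)"
      by (simp add: xy mult_S_grp \<phi> vadd_in_Z4_cube d8_mult_in_D8_elems)
    also have "\<dots> = P v \<otimes>\<^bsub>G\<^esub> (P (d8_act g w) \<otimes>\<^bsub>G\<^esub> Q g) \<otimes>\<^bsub>G\<^esub> Q h"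
      using mem gw by (simp add: P_mult Q_mult P Q G.m_assoc)
    also have "\<dots> = P v \<otimes>\<^bsub>G\<^esub> (Q g \<otimes>\<^bsub>G\<^esub> P w) \<otimes>\<^bsub>G\<^esub> Q h"
      using mem by (simp add: QP)
    also have "\<dots> = \<phi> x \<otimes>\<^bsub>G\<^esub> \<phi> y"
      using mem by (simp add: xy \<phi> P Q G.m_assoc)
    finally show "\<phi> (x \<otimes>\<^bsub>S_grp\<^esub> y) = \<phi> x \<otimes>\<^bsub>G\<^esub> \<phi> y" .
  qed
qed

section \<open>The iterated wreath product as a group of permutations\<close>

type_synonym point = "(bool \<times> bool) \<times> bool"

definition wreath_map ::
    "(bool \<Rightarrow> bool \<Rightarrow> bool) \<Rightarrow> (bool \<Rightarrow> bool) \<Rightarrow> bool \<Rightarrow> point \<Rightarrow> point" where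
  "wreath_map \<alpha> \<beta> \<gamma> = (\<lambda>((x1, x2), y). ((x1 \<noteq> \<alpha> y x2, x2 \<noteq> \<beta> y), y \<noteq> \<gamma>))"

lemma wreath_map_comp:
  "wreath_map \<alpha> \<beta> \<gamma> \<circ> wreath_map \<alpha>' \<beta>' \<gamma>' =
     wreath_map (\<lambda>y x2. \<alpha>' y x2 \<noteq> \<alpha> (y \<noteq> \<gamma>') (x2 \<noteq> \<beta>' y))
       (\<lambda>y. \<beta>' y \<noteq> \<beta> (y \<noteq> \<gamma>')) (\<gamma> \<noteq> \<gamma>')"
  by (auto simp: wreath_map_def fun_eq_iff)

lemma wreath_map_eq_iff:
  "wreath_map \<alpha> \<beta> \<gamma> = wreath_map \<alpha>' \<beta>' \<gamma>' \<longleftrightarrow> \<alpha> = \<alpha>' \<and> \<beta> = \<beta>' \<and> \<gamma> = \<gamma>'"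
proof
  assume eq: "wreath_map \<alpha> \<beta> \<gamma> = wreath_map \<alpha>' \<beta>' \<gamma>'"
  have "\<alpha> y x2 = \<alpha>' y x2 \<and> \<beta> y = \<beta>' y \<and> \<gamma> = \<gamma>'" for y x2
    using fun_cong[OF eq, of "((False, x2), y)"] by (auto simp: wreath_map_def)
  then show "\<alpha> = \<alpha>' \<and> \<beta> = \<beta>' \<and> \<gamma> = \<gamma>'" by (simp add: fun_eq_iff)
qed simp

lemma wreath_map_eq_iff_pointwise:
  "wreath_map \<alpha> \<beta> \<gamma> = wreath_map \<alpha>' \<beta>' \<gamma>' \<longleftrightarrow>
     (\<forall>y x2. \<alpha> y x2 = \<alpha>' y x2) \<and> (\<forall>y. \<beta> y = \<beta>' y) \<and> \<gamma> = \<gamma>'"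
  unfolding wreath_map_eq_iff by (simp add: fun_eq_iff)

lemma id_eq_wreath_map: "id = wreath_map (\<lambda>_ _. False) (\<lambda>_. False) False"
  by (auto simp: wreath_map_def fun_eq_iff)

lemma xor_xor_cancel: "((a = (\<not> c)) = (\<not> c)) = a"
  by auto

definition wreath_map_inv ::
    "(bool \<Rightarrow> bool \<Rightarrow> bool) \<Rightarrow> (bool \<Rightarrow> bool) \<Rightarrow> bool \<Rightarrow> point \<Rightarrow> point" where
  "wreath_map_inv \<alpha> \<beta> \<gamma> =
     wreath_map (\<lambda>y x2. \<alpha> (y \<noteq> \<gamma>) (x2 \<noteq> \<beta> (y \<noteq> \<gamma>))) (\<lambda>y. \<beta> (y \<noteq> \<gamma>)) \<gamma>"

lemma wreath_map_inv_left: "wreath_map_inv \<alpha> \<beta> \<gamma> \<circ> wreath_map \<alpha> \<beta> \<gamma> = id"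
  unfolding wreath_map_inv_def wreath_map_def
  by (rule ext) (simp add: xor_xor_cancel split: prod.split)

lemma wreath_map_inv_right: "wreath_map \<alpha> \<beta> \<gamma> \<circ> wreath_map_inv \<alpha> \<beta> \<gamma> = id"
  unfolding wreath_map_inv_def wreath_map_def
  by (rule ext) (simp add: xor_xor_cancel split: prod.split)

lemma bij_wreath_map: "bij (wreath_map \<alpha> \<beta> \<gamma>)"
  by (rule o_bij[OF wreath_map_inv_left wreath_map_inv_right])

lemma C2_perm_eq: "C2_perm = range (\<lambda>b z. z \<noteq> b)"
proof -
  have "(\<lambda>z. z \<noteq> False) = id" "(\<lambda>z. z \<noteq> True) = Not" by auto
  then show ?thesis by (simp add: C2_perm_def UNIV_bool)
qed

lemma all_in_range_iff: "(\<forall>y. f y \<in> range g) \<longleftrightarrow> (\<exists>a. f = g \<circ> a)"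
  by (auto simp: image_iff choice_iff fun_eq_iff)

lemma wreath_perm_range:
  "wreath_perm (range F) UNIV (range G) UNIV = range (\<lambda>(a, b). \<lambda>(x, y). (F (a y) x, G b y))"
proof (intro equalityI subsetI)
  fix p assume "p \<in> wreath_perm (range F) UNIV (range G) UNIV"
  then obtain f h where "h \<in> range G" "\<forall>y. f y \<in> range F" "p = (\<lambda>(x, y). (f y x, h y))"
    unfolding wreath_perm_def by auto
  moreover from this obtain a b where "f = F \<circ> a" "h = G b"
    unfolding all_in_range_iff by blast
  ultimately show "p \<in> range (\<lambda>(a, b). \<lambda>(x, y). (F (a y) x, G b y))"
    by (auto intro!: image_eqI[where x = "(a, b)"])
next
  fix p assume "p \<in> range (\<lambda>(a, b). \<lambda>(x, y). (F (a y) x, G b y))"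
  then obtain a b where "p = (\<lambda>(x, y). (F (a y) x, G b y))" by auto
  then show "p \<in> wreath_perm (range F) UNIV (range G) UNIV"
    unfolding wreath_perm_def by (intro CollectI exI[of _ "F \<circ> a"] exI[of _ "G b"]) auto
qed

lemma carrier_W3: "carrier W3 = range (\<lambda>(\<alpha>, \<beta>, \<gamma>). wreath_map \<alpha> \<beta> \<gamma>)"
proof -
  define inner :: "(bool \<Rightarrow> bool) \<times> bool \<Rightarrow> bool \<times> bool \<Rightarrow> bool \<times> bool"
    where "inner = (\<lambda>(a, b) (x1, x2). (x1 \<noteq> a x2, x2 \<noteq> b))"
  have "carrier W3 = range (\<lambda>(A, c) (x, y). (inner (A y) x, y \<noteq> c))"
    by (simp add: W3_def C2_perm_eq wreath_perm_range inner_def)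
  also have "\<dots> = range (\<lambda>(\<alpha>, \<beta>, \<gamma>). wreath_map \<alpha> \<beta> \<gamma>)"
  proof (intro equalityI subsetI)
    fix p :: "point \<Rightarrow> point" assume "p \<in> range (\<lambda>(A, c) (x, y). (inner (A y) x, y \<noteq> c))"
    then obtain A c where "p = (\<lambda>(x, y). (inner (A y) x, y \<noteq> c))" by auto
    then have "p = wreath_map (fst \<circ> A) (snd \<circ> A) c"
      by (auto simp: inner_def wreath_map_def fun_eq_iff split: prod.split)
    then show "p \<in> range (\<lambda>(\<alpha>, \<beta>, \<gamma>). wreath_map \<alpha> \<beta> \<gamma>)"
      by (auto intro!: image_eqI[where x = "(fst \<circ> A, snd \<circ> A, c)"])
  next
    fix p assume "p \<in> range (\<lambda>(\<alpha>, \<beta>, \<gamma>). wreath_map \<alpha> \<beta> \<gamma>)"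
    then obtain \<alpha> \<beta> \<gamma> where "p = wreath_map \<alpha> \<beta> \<gamma>" by auto
    then show "p \<in> range (\<lambda>(A, c) (x, y). (inner (A y) x, y \<noteq> c))"
      by (intro image_eqI[where x = "(\<lambda>y. (\<alpha> y, \<beta> y), \<gamma>)"])
        (auto simp: inner_def wreath_map_def fun_eq_iff)
  qed
  finally show ?thesis .
qed

lemma wreath_map_in_W3 [simp]: "wreath_map \<alpha> \<beta> \<gamma> \<in> carrier W3"
  using rangeI[of "\<lambda>(\<alpha>, \<beta>, \<gamma>). wreath_map \<alpha> \<beta> \<gamma>" "(\<alpha>, \<beta>, \<gamma>)"] by (simp add: carrier_W3)

lemma W3_elem_cases:
  assumes "p \<in> carrier W3" obtains \<alpha> \<beta> \<gamma> where "p = wreath_map \<alpha> \<beta> \<gamma>"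
  using assms by (auto simp: carrier_W3)

lemma id_in_W3: "id \<in> carrier W3"
  by (simp only: id_eq_wreath_map wreath_map_in_W3)

lemma mult_W3:
  assumes "p \<in> carrier W3" "q \<in> carrier W3" shows "p \<otimes>\<^bsub>W3\<^esub> q = p \<circ> q"
proof -
  have "p \<in> Bij UNIV" "q \<in> Bij UNIV"
    using assms by (auto elim!: W3_elem_cases simp: Bij_def bij_wreath_map)
  then show ?thesis by (simp add: W3_def BijGroup_def compose_def comp_def restrict_UNIV)
qed

lemma comp_in_W3: "p \<in> carrier W3 \<Longrightarrow> q \<in> carrier W3 \<Longrightarrow> p \<circ> q \<in> carrier W3"
  by (auto elim!: W3_elem_cases simp: wreath_map_comp)

lemma funpow_in_W3: "p \<in> carrier W3 \<Longrightarrow> p ^^ n \<in> carrier W3"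
  by (induction n) (simp_all add: id_in_W3 comp_in_W3)

lemma one_W3: "\<one>\<^bsub>W3\<^esub> = id"
  by (simp add: W3_def BijGroup_def fun_eq_iff)

lemma group_W3: "group W3"
proof (rule groupI)
  fix p q assume "p \<in> carrier W3" "q \<in> carrier W3"
  then show "p \<otimes>\<^bsub>W3\<^esub> q \<in> carrier W3"
    by (simp add: mult_W3 comp_in_W3)
next
  show "\<one>\<^bsub>W3\<^esub> \<in> carrier W3"
    by (simp add: one_W3 id_in_W3)
next
  fix p q r assume "p \<in> carrier W3" "q \<in> carrier W3" "r \<in> carrier W3"
  then show "p \<otimes>\<^bsub>W3\<^esub> q \<otimes>\<^bsub>W3\<^esub> r = p \<otimes>\<^bsub>W3\<^esub> (q \<otimes>\<^bsub>W3\<^esub> r)"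
    by (simp add: mult_W3 comp_in_W3 o_assoc)
next
  fix p assume "p \<in> carrier W3"
  then show "\<one>\<^bsub>W3\<^esub> \<otimes>\<^bsub>W3\<^esub> p = p"
    by (simp add: mult_W3 one_W3 id_in_W3)
next
  fix p assume "p \<in> carrier W3"
  then obtain \<alpha> \<beta> \<gamma> where p: "p = wreath_map \<alpha> \<beta> \<gamma>" by (rule W3_elem_cases)
  have "wreath_map_inv \<alpha> \<beta> \<gamma> \<in> carrier W3"
    by (simp add: wreath_map_inv_def)
  moreover have "wreath_map_inv \<alpha> \<beta> \<gamma> \<otimes>\<^bsub>W3\<^esub> p = \<one>\<^bsub>W3\<^esub>"
    using calculation by (simp add: p mult_W3 one_W3 wreath_map_inv_left)
  ultimately show "\<exists>q\<in>carrier W3. q \<otimes>\<^bsub>W3\<^esub> p = \<one>\<^bsub>W3\<^esub>" by blast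
qed

lemma card_W3: "card (carrier W3) = 128"
proof -
  have "inj (\<lambda>(\<alpha>, \<beta>, \<gamma>). wreath_map \<alpha> \<beta> \<gamma>)"
    by (auto simp: inj_def wreath_map_eq_iff)
  then have "card (carrier W3) = CARD((bool \<Rightarrow> bool \<Rightarrow> bool) \<times> (bool \<Rightarrow> bool) \<times> bool)"
    by (simp add: carrier_W3 card_image)
  also have "\<dots> = 128" by (simp add: card_fun)
  finally show ?thesis .
qed

section \<open>The homomorphism onto the wreath product\<close>

definition perm_v1 :: "point \<Rightarrow> point" where
  "perm_v1 = wreath_map (\<lambda>y x2. \<not> y \<or> x2) (\<lambda>y. y) False"
definition perm_v2 :: "point \<Rightarrow> point" where
  "perm_v2 = wreath_map (\<lambda>y x2. y \<or> \<not> x2) (\<lambda>y. \<not> y) False"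
definition perm_v3 :: "point \<Rightarrow> point" where
  "perm_v3 = wreath_map (\<lambda>y x2. \<not> (y \<and> x2)) (\<lambda>y. y) False"
definition perm_s :: "point \<Rightarrow> point" where
  "perm_s = wreath_map (\<lambda>_ _. False) (\<lambda>y. y) True"
definition perm_t :: "point \<Rightarrow> point" where
  "perm_t = wreath_map (\<lambda>_ _. False) (\<lambda>y. \<not> y) False"

abbreviation perm_cube :: "int \<times> int \<times> int \<Rightarrow> point \<Rightarrow> point" where
  "perm_cube \<equiv> cube_rep perm_v1 perm_v2 perm_v3"

abbreviation perm_d8 :: "int \<times> bool \<Rightarrow> point \<Rightarrow> point" where
  "perm_d8 \<equiv> d8_rep perm_s perm_t"

lemmas perm_gens_def = perm_v1_def perm_v2_def perm_v3_def perm_s_def perm_t_def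

lemmas wreath_calc = perm_gens_def wreath_map_comp id_eq_wreath_map wreath_map_eq_iff_pointwise
  all_bool_eq o_assoc numeral_eq_Suc

definition perm_rep :: "S_elem \<Rightarrow> point \<Rightarrow> point" where
  "perm_rep = (\<lambda>(v, g). perm_cube v \<circ> perm_d8 g)"

lemma perm_v_order_4: "perm_v1 ^^ 4 = id" "perm_v2 ^^ 4 = id" "perm_v3 ^^ 4 = id"
  by (simp_all add: wreath_calc)

lemma perm_v_commute:
  "perm_v1 \<circ> perm_v2 = perm_v2 \<circ> perm_v1" "perm_v1 \<circ> perm_v3 = perm_v3 \<circ> perm_v1"
  "perm_v2 \<circ> perm_v3 = perm_v3 \<circ> perm_v2"
  by (simp_all add: wreath_calc)

lemma d8_relations_perm: "d8_relations perm_s perm_t UNIV"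
proof -
  have "perm_s ^^ 4 = id" "perm_t \<circ> perm_t = id" "perm_t \<circ> perm_s = perm_s ^^ 3 \<circ> perm_t"
    by (simp_all add: wreath_calc)
  then show ?thesis by (simp add: d8_relations_def fun_eq_iff)
qed

lemma perm_conj_perm_cube:
  "perm_s \<circ> perm_cube w = perm_cube (act_s w) \<circ> perm_s"
  "perm_t \<circ> perm_cube w = perm_cube (act_t w) \<circ> perm_t"
proof -
  note intertwine = cube_rep_intertwine[OF perm_v_order_4 perm_v_commute]
  obtain a b c where w: "w = (a, b, c)" by (cases w)
  have "perm_s \<circ> perm_v1 = perm_cube (0, 1, 0) \<circ> perm_s"
    "perm_s \<circ> perm_v2 = perm_cube (0, 0, 1) \<circ> perm_s"
    "perm_s \<circ> perm_v3 = perm_cube (1, - 1, 1) \<circ> perm_s"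
    by (simp_all add: cube_rep_def wreath_calc)
  from intertwine[OF this] show "perm_s \<circ> perm_cube w = perm_cube (act_s w) \<circ> perm_s"
    by (simp add: w act_s_lincomb)
  have "perm_t \<circ> perm_v1 = perm_cube (0, 0, - 1) \<circ> perm_t"
    "perm_t \<circ> perm_v2 = perm_cube (0, - 1, 0) \<circ> perm_t"
    "perm_t \<circ> perm_v3 = perm_cube (- 1, 0, 0) \<circ> perm_t"
    by (simp_all add: cube_rep_def wreath_calc)
  from intertwine[OF this] show "perm_t \<circ> perm_cube w = perm_cube (act_t w) \<circ> perm_t"
    by (simp add: w act_t_lincomb)
qed

lemma perm_cube_in_W3: "perm_cube v \<in> carrier W3"
  by (simp add: cube_rep_def perm_gens_def comp_in_W3 funpow_in_W3 split: prod.split)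

lemma perm_d8_in_W3: "perm_d8 g \<in> carrier W3"
  by (cases g) (simp add: d8_rep_eq_comp perm_gens_def comp_in_W3 funpow_in_W3 id_in_W3)

lemma perm_rep_hom: "perm_rep \<in> hom S_grp W3"
proof (rule hom_S_grpI)
  show "monoid W3" using group_W3 by (rule group.is_monoid)
  show "perm_cube (vadd v w) = perm_cube v \<otimes>\<^bsub>W3\<^esub> perm_cube w" for v w
    using cube_rep_vadd[OF perm_v_order_4 perm_v_commute] by (simp add: mult_W3 perm_cube_in_W3)
  show "perm_d8 (d8_mult g h) = perm_d8 g \<otimes>\<^bsub>W3\<^esub> perm_d8 h"
    if "g \<in> D8_elems" "h \<in> D8_elems" for g h
    using d8_rep_mult[OF d8_relations_perm that] by (simp add: mult_W3 perm_d8_in_W3 fun_eq_iff)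
  show "perm_d8 g \<otimes>\<^bsub>W3\<^esub> perm_cube w = perm_cube (d8_act g w) \<otimes>\<^bsub>W3\<^esub> perm_d8 g"
    if "w \<in> Z4_cube" for g w
  proof -
    have "perm_d8 g \<circ> perm_cube w = perm_cube (d8_rep act_s act_t g w) \<circ> perm_d8 g"
      by (rule d8_rep_intertwine[OF d8_relations_act perm_conj_perm_cube that])
    then show ?thesis by (simp add: mult_W3 perm_d8_in_W3 perm_cube_in_W3 d8_act_eq_d8_rep)
  qed
  show "perm_rep (v, g) = perm_cube v \<otimes>\<^bsub>W3\<^esub> perm_d8 g" for v g
    by (simp add: perm_rep_def mult_W3 perm_d8_in_W3 perm_cube_in_W3)
qed (simp_all add: perm_cube_in_W3 perm_d8_in_W3)

definition flip_x1 :: "bool \<Rightarrow> bool \<Rightarrow> bool \<Rightarrow> point \<Rightarrow> point" where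
  "flip_x1 b y0 x0 = wreath_map (\<lambda>y x2. b \<and> y = y0 \<and> x2 = x0) (\<lambda>_. False) False"

definition flip_x2 :: "bool \<Rightarrow> bool \<Rightarrow> point \<Rightarrow> point" where
  "flip_x2 b y0 = wreath_map (\<lambda>_ _. False) (\<lambda>y. b \<and> y = y0) False"

definition flip_y :: "bool \<Rightarrow> point \<Rightarrow> point" where
  "flip_y b = wreath_map (\<lambda>_ _. False) (\<lambda>_. False) b"

lemmas flips_def = flip_x1_def flip_x2_def flip_y_def

lemma wreath_map_eq_flips:
  "wreath_map \<alpha> \<beta> \<gamma> = flip_y \<gamma> \<circ> flip_x2 (\<beta> False) False \<circ> flip_x2 (\<beta> True) True \<circ>
     flip_x1 (\<alpha> False False) False False \<circ> flip_x1 (\<alpha> False True) False True \<circ>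
     flip_x1 (\<alpha> True False) True False \<circ> flip_x1 (\<alpha> True True) True True"
  by (simp add: flips_def wreath_calc)

lemma flips_False: "flip_x1 False y x = id" "flip_x2 False y = id" "flip_y False = id"
  by (simp_all add: flips_def id_eq_wreath_map)

lemma perm_rep_flips:
  "perm_rep ((0, 3, 2), (0, True)) = flip_x1 True False False"
  "perm_rep ((0, 1, 2), (0, True)) = flip_x1 True False True"
  "perm_rep ((0, 2, 3), (2, True)) = flip_x1 True True False"
  "perm_rep ((0, 2, 1), (2, True)) = flip_x1 True True True"
  "perm_rep ((0, 0, 0), (0, True)) = flip_x2 True False"
  "perm_rep ((0, 0, 0), (2, True)) = flip_x2 True True"
  "perm_rep ((0, 0, 0), (3, True)) = flip_y True"
  by (simp_all add: perm_rep_def cube_rep_def d8_rep_eq_comp flips_def wreath_calc)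

lemma group_hom_perm_rep: "group_hom S_grp W3 perm_rep"
  by (simp add: group_hom_def group_hom_axioms_def group_S_grp group_W3 perm_rep_hom)

lemma perm_rep_surj: "perm_rep ` carrier S_grp = carrier W3"
proof
  interpret group_hom S_grp W3 perm_rep by (rule group_hom_perm_rep)
  show "perm_rep ` carrier S_grp \<subseteq> carrier W3" by (rule hom_closed[THEN image_subsetI])
next
  interpret group_hom S_grp W3 perm_rep by (rule group_hom_perm_rep)
  let ?H = "perm_rep ` carrier S_grp"
  have id: "id \<in> ?H" using subgroup.one_closed[OF img_is_subgroup] by (simp add: one_W3)
  have comp: "p \<circ> q \<in> ?H" if "p \<in> ?H" "q \<in> ?H" for p q
    using subgroup.m_closed[OF img_is_subgroup that] subgroup.subset[OF img_is_subgroup] that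
    by (simp add: mult_W3 subset_iff)
  have img: "perm_rep ((a, b, c), (k, e)) \<in> ?H"
    if "a \<in> {0..3}" "b \<in> {0..3}" "c \<in> {0..3}" "k \<in> {0..3}" for a b c k e
    using that by (intro imageI) (simp add: carrier_S_grp Z4_cube_def D8_elems_def)
  have flip_x1: "flip_x1 b y x \<in> ?H" for b y x
    using img[of 0 3 2 0 True] img[of 0 1 2 0 True] img[of 0 2 3 2 True] img[of 0 2 1 2 True]
    by (cases b; cases y; cases x) (simp_all add: perm_rep_flips flips_False id)
  have flip_x2: "flip_x2 b y \<in> ?H" for b y
    using img[of 0 0 0 0 True] img[of 0 0 0 2 True]
    by (cases b; cases y) (simp_all add: perm_rep_flips flips_False id)
  have flip_y: "flip_y b \<in> ?H" for b
    using img[of 0 0 0 3 True] by (cases b) (simp_all add: perm_rep_flips flips_False id)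
  show "carrier W3 \<subseteq> ?H"
  proof
    fix p assume "p \<in> carrier W3"
    then obtain \<alpha> \<beta> \<gamma> where "p = wreath_map \<alpha> \<beta> \<gamma>" by (rule W3_elem_cases)
    then show "p \<in> ?H" by (simp only: wreath_map_eq_flips) (intro comp flip_x1 flip_x2 flip_y)
  qed
qed

section \<open>The kernel\<close>

lemma (in group_hom) card_kernel_mult_card_image:
  assumes "h ` carrier G = carrier H"
  shows "card (kernel G H h) * card (carrier H) = card (carrier G)"
proof -
  have "card (rcosets\<^bsub>G\<^esub> kernel G H h) = card (carrier H)"
    using iso_same_card[OF FactGroup_iso[OF assms]] by (simp add: FactGroup_def)
  then show ?thesis using G.lagrange[OF subgroup_kernel] by (simp add: order_def mult.commute)
qed

lemma (in group) ord_eq_prime_power: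
  assumes "x \<in> carrier G" "Factorial_Ring.prime (p :: nat)"
    and "x [^] (p ^ Suc n) = \<one>" "x [^] (p ^ n) \<noteq> \<one>"
  shows "ord x = p ^ Suc n"
proof -
  have "ord x dvd p ^ Suc n" using assms(1,3) pow_eq_id by blast
  then obtain i where i: "i \<le> Suc n" "ord x = p ^ i"
    using divides_primepow_nat[OF assms(2)] by blast
  have "\<not> p ^ i dvd p ^ n"
    using assms(1,4) i(2) by (simp add: pow_eq_id)
  then have "i = Suc n" using i(1) le_imp_power_dvd by (metis le_SucE)
  then show ?thesis using i(2) by simp
qed

lemma v1v3_eq: "gen_v1 \<otimes>\<^bsub>S_grp\<^esub> gen_v3 = ((1, 0, 1), (0, False))"
  by (simp add: gen_v1_def gen_v3_def mult_S_grp vadd_def vmod_def d8_act_def d8_mult_def)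

lemma v1v3_in_carrier: "gen_v1 \<otimes>\<^bsub>S_grp\<^esub> gen_v3 \<in> carrier S_grp"
  by (simp add: v1v3_eq carrier_S_grp Z4_cube_def D8_elems_def)

lemma ord_v1v3: "group.ord S_grp (gen_v1 \<otimes>\<^bsub>S_grp\<^esub> gen_v3) = 4"
proof -
  interpret group S_grp by (rule group_S_grp)
  have "((1, 0, 1), (0, False)) [^]\<^bsub>S_grp\<^esub> (2 ^ Suc 1 :: nat) = \<one>\<^bsub>S_grp\<^esub>"
    "((1, 0, 1), (0, False)) [^]\<^bsub>S_grp\<^esub> (2 ^ 1 :: nat) \<noteq> \<one>\<^bsub>S_grp\<^esub>"
    by (simp_all add: numeral_eq_Suc mult_S_grp one_S_grp vadd_def vmod_def d8_act_def d8_mult_def)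
  then show ?thesis
    using ord_eq_prime_power[OF v1v3_in_carrier, of 2 1] by (simp add: v1v3_eq)
qed

lemma v1v3_in_kernel: "gen_v1 \<otimes>\<^bsub>S_grp\<^esub> gen_v3 \<in> kernel S_grp W3 perm_rep"
  using v1v3_in_carrier
  by (simp add: v1v3_eq kernel_def one_W3 perm_rep_def cube_rep_def d8_rep_eq_comp wreath_calc)

theorem lemma2p1:
  shows "card (generate S_grp {gen_v1 \<otimes>\<^bsub>S_grp\<^esub> gen_v3}) = 4
       \<and> generate S_grp {gen_v1 \<otimes>\<^bsub>S_grp\<^esub> gen_v3} \<lhd> S_grp
       \<and> S_grp Mod (generate S_grp {gen_v1 \<otimes>\<^bsub>S_grp\<^esub> gen_v3}) \<cong> W3"
proof -
  interpret S: group S_grp by (rule group_S_grp)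
  interpret group_hom S_grp W3 perm_rep by (rule group_hom_perm_rep)
  let ?N = "generate S_grp {gen_v1 \<otimes>\<^bsub>S_grp\<^esub> gen_v3}" and ?K = "kernel S_grp W3 perm_rep"
  have card_N: "card ?N = 4"
    using S.generate_pow_card[OF v1v3_in_carrier] ord_v1v3 by simp
  have "card ?K = 4"
    using card_kernel_mult_card_image[OF perm_rep_surj] by (simp add: card_S_grp card_W3)
  moreover have "?N \<subseteq> ?K"
    using v1v3_in_kernel by (intro S.generate_subgroup_incl subgroup_kernel) auto
  moreover have "finite ?K"
    by (rule finite_subset[of _ "carrier S_grp"])
      (auto simp: kernel_def carrier_S_grp Z4_cube_def D8_elems_def)
  ultimately have "?N = ?K" using card_N by (simp add: card_subset_eq)
  then show ?thesis using card_N normal_kernel FactGroup_iso[OF perm_rep_surj] by simp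
qed

end
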